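(* Let $K$ be a finite simplicial complex, $|\cdot|$ a norm on $\mathbb{R}^n$, and $f\colon|K|\to\mathbb{R}^n$ a piecewise linear function that has a root in $|K|$. Then $\mathrm{rob}(f)$ is a critical value of $f$, i.e. there is a simplex $\Delta\in K$ with $\mathrm{rob}(f)=\min_{x\in\Delta}|f(x)|$.
   Context: A function is piecewise linear on $|K|$ if it is affine on each simplex of $K$. For $\alpha\ge0$, an $\alpha$-perturbation of $f$ is a continuous $g\colon|K|\to\mathbb{R}^n$ with $\max_{x\in|K|}|g(x)-f(x)|\le\alpha$. For $f$ having a root, $\mathrm{rob}(f):=\max\{\alpha\ge0:\text{every }\alpha\text{-perturbation of }f\text{ has a root in }|K|\}$ (this set is closed and bounded). *)

theory Defs
  imports "HOL-Analysis.Analysis"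
begin

definition is_norm :: "('v::real_vector \<Rightarrow> real) \<Rightarrow> bool" where
  "is_norm N \<longleftrightarrow>
     (\<forall>x. 0 \<le> N x) \<and> (\<forall>x. N x = 0 \<longleftrightarrow> x = 0) \<and>
     (\<forall>c x. N (c *\<^sub>R x) = \<bar>c\<bar> * N x) \<and>
     (\<forall>x y. N (x + y) \<le> N x + N y)"

definition cplx_body :: "'a set set \<Rightarrow> 'a set" where
  "cplx_body K = \<Union>K"

definition piecewise_linear_on ::
    "'a::euclidean_space set set \<Rightarrow> ('a \<Rightarrow> 'b::real_normed_vector) \<Rightarrow> bool" where
  "piecewise_linear_on K f \<longleftrightarrow>
     (\<forall>D\<in>K. \<exists>A b. linear A \<and> (\<forall>x\<in>D. f x = A x + b))"

definition perturbation ::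
    "('b::real_normed_vector \<Rightarrow> real) \<Rightarrow> 'a::euclidean_space set set \<Rightarrow> ('a \<Rightarrow> 'b) \<Rightarrow> real \<Rightarrow> ('a \<Rightarrow> 'b) \<Rightarrow> bool" where
  "perturbation N K f \<alpha> g \<longleftrightarrow>
     continuous_on (cplx_body K) g \<and> (\<forall>x\<in>cplx_body K. N (g x - f x) \<le> \<alpha>)"

text \<open>rob(f) = max of the alphas such that every alpha-perturbation has a root in |K|
  (the set is closed and bounded, so the max is its supremum).\<close>
definition rob ::
    "('b::real_normed_vector \<Rightarrow> real) \<Rightarrow> 'a::euclidean_space set set \<Rightarrow> ('a \<Rightarrow> 'b) \<Rightarrow> real" where
  "rob N K f = Sup {\<alpha>. 0 \<le> \<alpha> \<and>
      (\<forall>g. perturbation N K f \<alpha> g \<longrightarrow> (\<exists>x\<in>cplx_body K. g x = 0))}"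

end

theory Submission
  imports Defs
begin

text \<open>For \<open>\<alpha> > 0\<close>, \<open>f\<close> admits a root-free \<open>\<alpha>\<close>-perturbation iff its restriction to the
  superlevel set \<open>{|f| \<ge> \<alpha>}\<close> extends to a nowhere vanishing map on \<open>|K|\<close>: the straight-line
  homotopy from such a perturbation to \<open>f\<close> avoids \<open>0\<close> on the superlevel set, so Borsuk's
  homotopy extension theorem applies; conversely an extension \<open>e\<close> gives the perturbation
  \<open>f + c (e - f)\<close>, with \<open>e - f\<close> clipped to norm \<open>\<alpha>\<close>.
  If no critical value lies in \<open>[\<alpha>, \<beta>]\<close>, the superlevel set for \<open>\<alpha>\<close> deforms into the one
  for \<open>\<beta>\<close>: simplices are collapsed one by one, starting with maximal ones, by pushing them
  radially outwards from a relative interior point where \<open>|f| < \<alpha>\<close>; as \<open>f\<close> is affine on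
  the simplex, \<open>|f|\<close> does not decrease along these rays. Hence extendability passes from \<open>\<beta>\<close>
  down to \<open>\<alpha>\<close>. Finally \<open>rob(f)\<close> is itself a robust radius, so if it were not critical then
  extendability at a slightly larger level would pass down to \<open>rob(f)\<close>, a contradiction.\<close>

section \<open>Norms\<close>

lemma is_norm_nonneg: "is_norm N \<Longrightarrow> 0 \<le> N x"
  by (simp add: is_norm_def)

lemma is_norm_eq_zero: "is_norm N \<Longrightarrow> N x = 0 \<longleftrightarrow> x = 0"
  by (simp add: is_norm_def)

lemma is_norm_scaleR: "is_norm N \<Longrightarrow> N (c *\<^sub>R x) = \<bar>c\<bar> * N x"
  by (simp add: is_norm_def)

lemma is_norm_triangle: "is_norm N \<Longrightarrow> N (x + y) \<le> N x + N y"
  by (simp add: is_norm_def)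

lemma is_norm_zero: "is_norm N \<Longrightarrow> N 0 = 0"
  by (simp add: is_norm_def)

lemma is_norm_minus: "is_norm N \<Longrightarrow> N (- x) = N x"
  using is_norm_scaleR[of N "-1" x] by simp

lemma is_norm_pos: "is_norm N \<Longrightarrow> x \<noteq> 0 \<Longrightarrow> 0 < N x"
  using is_norm_nonneg is_norm_eq_zero by (metis order_le_less)

lemma is_norm_convex_combination:
  assumes "is_norm N" "0 \<le> t" "t \<le> 1"
  shows "N ((1 - t) *\<^sub>R x + t *\<^sub>R y) \<le> (1 - t) * N x + t * N y"
  using is_norm_triangle[OF assms(1)] is_norm_scaleR[OF assms(1)] assms(2,3)
  by (metis abs_of_nonneg diff_ge_0_iff_ge)

lemma is_norm_convex_on:
  assumes "is_norm N" shows "convex_on UNIV N"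
  by (intro convex_onI) (simp_all add: is_norm_convex_combination[OF assms])

lemma is_norm_continuous_on:
  fixes N :: "'v::euclidean_space \<Rightarrow> real"
  shows "is_norm N \<Longrightarrow> continuous_on S N"
  using convex_on_continuous[OF open_UNIV is_norm_convex_on] continuous_on_subset by blast

lemma is_norm_ge_on_ray:
  assumes "is_norm N" "1 \<le> s" "N p \<le> N q"
  shows "N q \<le> N ((1 - s) *\<^sub>R p + s *\<^sub>R q)"
proof -
  define y where "y = (1 - s) *\<^sub>R p + s *\<^sub>R q"
  have "q = (1 - 1/s) *\<^sub>R p + (1/s) *\<^sub>R y"
    using assms(2) by (simp add: y_def algebra_simps diff_divide_distrib)
  then have "N q \<le> (1 - 1/s) * N p + (1/s) * N y"
    using is_norm_convex_combination[OF assms(1), of "1/s" p y] assms(2) by simp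
  also have "\<dots> \<le> (1 - 1/s) * N q + (1/s) * N y"
    using assms(2,3) by (intro add_right_mono mult_left_mono) auto
  finally have "(1/s) * N q \<le> (1/s) * N y"
    by (simp add: algebra_simps)
  then show ?thesis
    using assms(2) by (simp add: y_def divide_le_cancel)
qed

lemma is_norm_zero_notin_segment:
  assumes "is_norm N" "0 < \<alpha>" "N (y - x) \<le> \<alpha>" "\<alpha> \<le> N x" "y \<noteq> 0"
  shows "0 \<notin> closed_segment y x"
proof
  assume "0 \<in> closed_segment y x"
  then obtain u where u: "0 \<le> u" "u \<le> 1" and "(1 - u) *\<^sub>R y + u *\<^sub>R x = 0"
    by (auto simp: in_segment)
  then have "x = - ((1 - u) *\<^sub>R (y - x))"
    by (simp add: algebra_simps)
  then have "N x = N (- ((1 - u) *\<^sub>R (y - x)))"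
    by (rule arg_cong)
  also have "\<dots> = (1 - u) * N (y - x)"
    using u by (simp add: is_norm_minus[OF assms(1)] is_norm_scaleR[OF assms(1)])
  also have "\<dots> \<le> (1 - u) * \<alpha>"
    using assms(3) u by (intro mult_left_mono) auto
  finally have "u * \<alpha> \<le> 0"
    using assms(4) by (simp add: algebra_simps)
  then have "u = 0"
    using assms(2) u by (simp add: mult_le_0_iff)
  with \<open>(1 - u) *\<^sub>R y + u *\<^sub>R x = 0\<close> assms(5) show False
    by simp
qed

lemma is_norm_clipped_step:
  assumes "is_norm N" "0 < \<alpha>" "y \<noteq> 0" "N x = \<alpha> \<Longrightarrow> y = x"
  defines "z \<equiv> x + (\<alpha> / max \<alpha> (N (y - x))) *\<^sub>R (y - x)"
  shows "N (z - x) \<le> \<alpha>" and "z \<noteq> 0"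
proof -
  define c where "c = \<alpha> / max \<alpha> (N (y - x))"
  have c: "0 < c" "c \<le> 1"
    using assms(2) by (auto simp: c_def)
  have "z - x = c *\<^sub>R (y - x)"
    by (simp add: z_def c_def)
  then have Nzx: "N (z - x) = c * N (y - x)"
    using c by (simp add: is_norm_scaleR[OF assms(1)])
  show "N (z - x) \<le> \<alpha>"
    using assms(2) by (auto simp: Nzx c_def max_def field_simps)
  show "z \<noteq> 0"
  proof
    assume "z = 0"
    show False
    proof (cases "N (y - x) \<le> \<alpha>")
      case True
      then show False
        using \<open>z = 0\<close> assms(2,3) by (simp add: z_def)
    next
      case False
      then have "c * N (y - x) = \<alpha>"
        using assms(2) by (simp add: c_def)
      moreover have "x = - (z - x)"
        using \<open>z = 0\<close> by simp
      ultimately have "N x = \<alpha>"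
        using Nzx by (simp add: is_norm_minus[OF assms(1)])
      then show False
        using False assms(2,4) is_norm_zero[OF assms(1)] by simp
    qed
  qed
qed

section \<open>Radial projection onto the relative frontier\<close>

lemma rel_frontier_ray_ge_one:
  fixes S :: "'a::euclidean_space set"
  assumes "convex S" "a \<in> rel_interior S" "x \<in> closure S" "0 \<le> d"
    and "a + d *\<^sub>R (x - a) \<in> rel_frontier S"
  shows "1 \<le> d"
proof (rule ccontr)
  assume "\<not> 1 \<le> d"
  then have "x - (1 - d) *\<^sub>R (x - a) \<in> rel_interior S"
    using rel_interior_closure_convex_shrink[OF assms(1-3), of "1 - d"] assms(4) by simp
  moreover have "x - (1 - d) *\<^sub>R (x - a) = a + d *\<^sub>R (x - a)"
    by (simp add: algebra_simps)
  ultimately show False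
    using assms(5) by (simp add: rel_frontier_def)
qed

lemma rel_frontier_ray_unique:
  fixes S :: "'a::euclidean_space set"
  assumes "convex S" "a \<in> rel_interior S" "0 < d" "0 < k"
    and "a + d *\<^sub>R l \<in> rel_frontier S" "a + k *\<^sub>R l \<in> rel_frontier S"
  shows "d = k"
proof -
  have "1 \<le> d / k" if "0 < d" "0 < k" "a + d *\<^sub>R l \<in> rel_frontier S" "a + k *\<^sub>R l \<in> rel_frontier S"
    for d k
  proof (rule rel_frontier_ray_ge_one[OF assms(1,2)])
    show "a + k *\<^sub>R l \<in> closure S"
      using that(4) by (simp add: rel_frontier_def)
    show "a + (d / k) *\<^sub>R (a + k *\<^sub>R l - a) \<in> rel_frontier S"
      using that by simp
  qed (use that in simp)
  from this[of d k] this[of k d] assms(3-6) show ?thesis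
    by (simp add: le_divide_eq)
qed

lemma radial_projection_to_rel_frontier:
  fixes S :: "'a::euclidean_space set"
  assumes "convex S" "bounded S" "a \<in> rel_interior S"
  obtains \<rho> where "continuous_on (affine hull S - {a}) \<rho>"
    and "\<And>x. x \<in> affine hull S - {a} \<Longrightarrow> \<rho> x \<in> rel_frontier S \<and> (\<exists>d>0. \<rho> x = a + d *\<^sub>R (x - a))"
proof -
  define V where "V = {l. a + l \<in> affine hull S}"
  have "\<exists>d>0. a + d *\<^sub>R l \<in> rel_frontier S" if "l \<in> V - {0}" for l
  proof -
    have "a + l \<in> affine hull S" "l \<noteq> 0"
      using that by (auto simp: V_def)
    from ray_to_rel_frontier[OF assms(2,3) this] show ?thesis
      by blast
  qed
  then obtain dd where dd: "\<And>l. l \<in> V - {0} \<Longrightarrow> 0 < dd l \<and> a + dd l *\<^sub>R l \<in> rel_frontier S"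
    by metis
  have aS: "a \<in> affine hull S"
    by (meson assms(3) subsetD hull_inc rel_interior_subset)
  have "continuous_on (V - {0}) (\<lambda>l. dd l *\<^sub>R l)"
  proof (rule continuous_on_compact_surface_projection)
    show "compact ((\<lambda>z. z - a) ` rel_frontier S)"
      by (intro compact_continuous_image continuous_intros compact_rel_frontier_bounded assms(2))
    show "(\<lambda>z. z - a) ` rel_frontier S \<subseteq> V - {0}"
    proof (rule image_subsetI)
      fix x assume x: "x \<in> rel_frontier S"
      then have "x \<in> affine hull S" "x \<noteq> a"
        using rel_frontier_affine_hull[of S] assms(3) by (auto simp: rel_frontier_def)
      then show "x - a \<in> V - {0}"
        by (simp add: V_def)
    qed
    show "cone V"
      unfolding cone_def
    proof (intro ballI allI impI)
      fix l and c :: real assume "l \<in> V" "0 \<le> c"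
      then have "(1 - c) *\<^sub>R a + c *\<^sub>R (a + l) \<in> affine hull S"
        using aS by (intro mem_affine[OF affine_affine_hull]) (auto simp: V_def)
      then show "c *\<^sub>R l \<in> V"
        by (simp add: V_def algebra_simps)
    qed
    show "(0 < k \<and> k *\<^sub>R l \<in> (\<lambda>z. z - a) ` rel_frontier S) \<longleftrightarrow> dd l = k"
      if "l \<in> V - {0}" for l k
    proof
      assume k: "0 < k \<and> k *\<^sub>R l \<in> (\<lambda>z. z - a) ` rel_frontier S"
      then have "a + k *\<^sub>R l \<in> rel_frontier S"
        by (auto simp: algebra_simps)
      then show "dd l = k"
        using rel_frontier_ray_unique[OF assms(1,3)] dd[OF that] k by blast
    next
      assume "dd l = k"
      then have "0 < k" "a + k *\<^sub>R l \<in> rel_frontier S"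
        using dd[OF that] by auto
      then show "0 < k \<and> k *\<^sub>R l \<in> (\<lambda>z. z - a) ` rel_frontier S"
        by (metis add_diff_cancel_left' rev_image_eqI)
    qed
  qed
  then have "continuous_on (affine hull S - {a}) (\<lambda>x. dd (x - a) *\<^sub>R (x - a))"
    by (rule continuous_on_compose2) (auto simp: V_def intro!: continuous_intros)
  then have "continuous_on (affine hull S - {a}) (\<lambda>x. a + dd (x - a) *\<^sub>R (x - a))"
    by (intro continuous_on_add continuous_on_const)
  moreover have "a + dd (x - a) *\<^sub>R (x - a) \<in> rel_frontier S" "0 < dd (x - a)"
    if "x \<in> affine hull S - {a}" for x
    using dd[of "x - a"] that by (auto simp: V_def)
  ultimately show ?thesis
    by (intro that[of "\<lambda>x. a + dd (x - a) *\<^sub>R (x - a)"]) auto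
qed

section \<open>Deformations and nonvanishing extensions\<close>

lemma homotopic_nonvanishing_extension:
  fixes e h :: "'a::euclidean_space \<Rightarrow> 'b::euclidean_space"
  assumes "closedin (top_of_set A) W" "continuous_on A e" "e ` A \<subseteq> - {0}"
    and "homotopic_with_canon (\<lambda>_. True) W (- {0}) e h"
  obtains g where "continuous_on A g" "g ` A \<subseteq> - {0}" "\<And>x. x \<in> W \<Longrightarrow> g x = h x"
proof -
  have ANR: "(ANR W \<and> ANR A) \<or> ANR (- {0::'b})"
    by (simp add: open_Compl open_imp_ANR)
  have "e \<in> A \<rightarrow> - {0}"
    using assms(3) by auto
  then show ?thesis
  proof (rule Borsuk_homotopy_extension_homotopic[OF assms(1) ANR assms(2) _ assms(4)])
    fix g assume "continuous_on A g" "g ` A \<subseteq> - {0}" "\<And>x. x \<in> W \<Longrightarrow> g x = h x"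
    then show ?thesis
      by (rule that)
  qed
qed

definition deforms_into :: "'a::topological_space set \<Rightarrow> 'a set \<Rightarrow> 'a set \<Rightarrow> bool" where
  "deforms_into U S T \<longleftrightarrow>
     (\<exists>\<psi>. continuous_on S \<psi> \<and> \<psi> ` S \<subseteq> T \<and> homotopic_with_canon (\<lambda>_. True) S U id \<psi>)"

lemma deforms_into_subset:
  fixes S :: "'a::real_normed_vector set"
  assumes "S \<subseteq> T" "S \<subseteq> U"
  shows "deforms_into U S T"
  unfolding deforms_into_def
proof (intro exI conjI)
  show "homotopic_with_canon (\<lambda>_. True) S U id id"
    by (rule homotopic_with_linear) (use assms(2) in auto)
qed (use assms(1) in auto)

lemma deforms_into_trans:
  assumes "deforms_into U S S'" "deforms_into U S' T"
  shows "deforms_into U S T"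
proof -
  obtain \<rho> where \<rho>: "continuous_on S \<rho>" "\<rho> ` S \<subseteq> S'"
    and hom_\<rho>: "homotopic_with_canon (\<lambda>_. True) S U id \<rho>"
    using assms(1) by (auto simp: deforms_into_def)
  obtain \<psi> where \<psi>: "continuous_on S' \<psi>" "\<psi> ` S' \<subseteq> T"
    and hom_\<psi>: "homotopic_with_canon (\<lambda>_. True) S' U id \<psi>"
    using assms(2) by (auto simp: deforms_into_def)
  have "homotopic_with_canon (\<lambda>_. True) S U (id \<circ> \<rho>) (\<psi> \<circ> \<rho>)"
    by (rule homotopic_with_compose_continuous_right[OF hom_\<psi> \<rho>(1)]) (use \<rho>(2) in auto)
  then have "homotopic_with_canon (\<lambda>_. True) S U id (\<psi> \<circ> \<rho>)"
    unfolding id_comp by (rule homotopic_with_trans[OF hom_\<rho>])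
  moreover have "continuous_on S (\<psi> \<circ> \<rho>)"
    by (rule continuous_on_compose[OF \<rho>(1) continuous_on_subset[OF \<psi>(1) \<rho>(2)]])
  moreover have "(\<psi> \<circ> \<rho>) ` S \<subseteq> T"
    using \<rho>(2) \<psi>(2) by (auto simp: image_subset_iff)
  ultimately show ?thesis
    unfolding deforms_into_def by (intro exI[of _ "\<psi> \<circ> \<rho>"]) simp
qed

definition face_closed :: "'a::real_vector set set \<Rightarrow> bool" where
  "face_closed L \<longleftrightarrow> (\<forall>D\<in>L. \<forall>F. F face_of D \<longrightarrow> F \<in> L)"

section \<open>Superlevel sets of a piecewise linear map\<close>

locale pl_map_with_root =
  fixes K :: "'a::euclidean_space set set"
    and N :: "real ^ 'n \<Rightarrow> real"
    and f :: "'a \<Rightarrow> real ^ 'n"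
  assumes simplicial_complex: "simplicial_complex K"
    and norm: "is_norm N"
    and piecewise_linear: "piecewise_linear_on K f"
    and has_root: "\<exists>x\<in>cplx_body K. f x = 0"
begin

abbreviation body :: "'a set" where
  "body \<equiv> cplx_body K"

definition superlevel :: "real \<Rightarrow> 'a set" where
  "superlevel t = {x \<in> body. t \<le> N (f x)}"

definition extends_nonvanishing :: "real \<Rightarrow> bool" where
  "extends_nonvanishing t \<longleftrightarrow>
     (\<exists>e. continuous_on body e \<and> e ` body \<subseteq> - {0} \<and> (\<forall>x\<in>superlevel t. e x = f x))"

definition robust_radii :: "real set" where
  "robust_radii = {\<alpha>. 0 \<le> \<alpha> \<and> (\<forall>g. perturbation N K f \<alpha> g \<longrightarrow> (\<exists>x\<in>body. g x = 0))}"

definition critical_value :: "real \<Rightarrow> bool" where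
  "critical_value t \<longleftrightarrow> (\<exists>D\<in>K. \<exists>x0\<in>D. N (f x0) = t \<and> (\<forall>x\<in>D. N (f x0) \<le> N (f x)))"

lemma finite_K: "finite K"
  using simplicial_complex by (simp add: simplicial_complex_def)

lemma polytope_simplex: "D \<in> K \<Longrightarrow> polytope D"
  using simplicial_complex simplex_imp_polytope unfolding simplicial_complex_def by metis

lemma compact_simplex: "D \<in> K \<Longrightarrow> compact D"
  by (simp add: polytope_imp_compact polytope_simplex)

lemma convex_simplex: "D \<in> K \<Longrightarrow> convex D"
  by (simp add: polytope_imp_convex polytope_simplex)

lemma closed_simplex: "D \<in> K \<Longrightarrow> closed D"
  by (simp add: polytope_imp_closed polytope_simplex)

lemma simplex_subset_body: "D \<in> K \<Longrightarrow> D \<subseteq> body"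
  by (auto simp: cplx_body_def)

lemma face_of_simplex_in_K: "D \<in> K \<Longrightarrow> F face_of D \<Longrightarrow> F \<in> K"
  using simplicial_complex by (auto simp: simplicial_complex_def)

lemma Int_simplex_face_of: "D \<in> K \<Longrightarrow> E \<in> K \<Longrightarrow> (D \<inter> E) face_of D"
  using simplicial_complex by (auto simp: simplicial_complex_def)

lemma affine_on_simplex:
  assumes "D \<in> K" "x \<in> D" "y \<in> D" "(1 - t) *\<^sub>R x + t *\<^sub>R y \<in> D"
  shows "f ((1 - t) *\<^sub>R x + t *\<^sub>R y) = (1 - t) *\<^sub>R f x + t *\<^sub>R f y"
proof -
  obtain L b where L: "linear L" and f_eq: "\<And>z. z \<in> D \<Longrightarrow> f z = L z + b"
    using piecewise_linear assms(1) by (auto simp: piecewise_linear_on_def)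
  have "f ((1 - t) *\<^sub>R x + t *\<^sub>R y) = (1 - t) *\<^sub>R L x + t *\<^sub>R L y + b"
    using f_eq[OF assms(4)] by (simp add: linear_add[OF L] linear_scale[OF L])
  also have "\<dots> = (1 - t) *\<^sub>R f x + t *\<^sub>R f y"
    using f_eq[OF assms(2)] f_eq[OF assms(3)] by (simp add: algebra_simps)
  finally show ?thesis .
qed

lemma continuous_on_simplex: "D \<in> K \<Longrightarrow> continuous_on D f"
proof -
  assume "D \<in> K"
  then obtain L b where L: "linear L" and f_eq: "\<And>z. z \<in> D \<Longrightarrow> f z = L z + b"
    using piecewise_linear by (auto simp: piecewise_linear_on_def)
  have "continuous_on D (\<lambda>z. L z + b)"
    using L by (intro continuous_intros linear_continuous_on) (simp add: linear_conv_bounded_linear)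
  then show ?thesis
    by (rule continuous_on_eq) (simp add: f_eq)
qed

lemma continuous_on_body: "continuous_on body f"
proof -
  have "continuous_on (\<Union>D\<in>K. D) f"
    by (rule continuous_on_closed_Union) (simp_all add: finite_K closed_simplex continuous_on_simplex)
  then show ?thesis
    by (simp add: cplx_body_def)
qed

lemma continuous_on_compose_norm: "continuous_on S h \<Longrightarrow> continuous_on S (\<lambda>x. N (h x))"
  using continuous_on_compose2[OF is_norm_continuous_on[OF norm, of UNIV]] by auto

lemma compact_body: "compact body"
  unfolding cplx_body_def using finite_K compact_simplex by (intro compact_Union) auto

lemma body_nonempty: "body \<noteq> {}"
  using has_root by auto

lemma closed_superlevel: "closed (superlevel t)"
proof -
  have "closed (body \<inter> (\<lambda>x. N (f x)) -` {t..})"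
    using compact_body continuous_on_compose_norm[OF continuous_on_body]
    by (intro continuous_closed_preimage) (auto simp: compact_imp_closed)
  moreover have "body \<inter> (\<lambda>x. N (f x)) -` {t..} = superlevel t"
    by (auto simp: superlevel_def)
  ultimately show ?thesis
    by simp
qed

lemma superlevel_subset_body: "superlevel t \<subseteq> body"
  by (auto simp: superlevel_def)

lemma f_nonzero_on_superlevel: "0 < t \<Longrightarrow> x \<in> superlevel t \<Longrightarrow> f x \<noteq> 0"
  using is_norm_zero[OF norm] by (auto simp: superlevel_def)

lemma min_on_simplex:
  assumes "D \<in> K" "D \<noteq> {}"
  obtains x0 where "x0 \<in> D" "\<And>x. x \<in> D \<Longrightarrow> N (f x0) \<le> N (f x)"
  using continuous_attains_inf[OF compact_simplex assms(2) continuous_on_compose_norm[OF continuous_on_simplex]]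
    assms(1) by blast

lemma finite_critical_values: "finite {t. critical_value t}"
proof -
  have "{t. critical_value t} \<subseteq> (\<lambda>D. Inf ((\<lambda>x. N (f x)) ` D)) ` K"
  proof
    fix t assume "t \<in> {t. critical_value t}"
    then obtain D x0 where "D \<in> K" "x0 \<in> D" "N (f x0) = t" "\<forall>x\<in>D. N (f x0) \<le> N (f x)"
      by (auto simp: critical_value_def)
    moreover from this have "Inf ((\<lambda>x. N (f x)) ` D) = t"
      by (intro cInf_eq_minimum) auto
    ultimately show "t \<in> (\<lambda>D. Inf ((\<lambda>x. N (f x)) ` D)) ` K"
      by (metis rev_image_eqI)
  qed
  then show ?thesis
    using finite_K finite_subset by blast
qed

lemma extends_nonvanishing_if_nonvanishing_perturbation:
  assumes "0 < \<alpha>" "perturbation N K f \<alpha> g" "\<forall>x\<in>body. g x \<noteq> 0"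
  shows "extends_nonvanishing \<alpha>"
proof -
  have g: "continuous_on body g" "\<And>x. x \<in> body \<Longrightarrow> N (g x - f x) \<le> \<alpha>"
    using assms(2) by (auto simp: perturbation_def)
  have "homotopic_with_canon (\<lambda>_. True) (superlevel \<alpha>) (- {0}) g f"
  proof (rule homotopic_with_linear)
    show "continuous_on (superlevel \<alpha>) g" "continuous_on (superlevel \<alpha>) f"
      using continuous_on_subset[OF g(1) superlevel_subset_body]
      continuous_on_subset[OF continuous_on_body superlevel_subset_body] by auto
    show "closed_segment (g x) (f x) \<subseteq> - {0}" if "x \<in> superlevel \<alpha>" for x
      using is_norm_zero_notin_segment[OF norm assms(1) g(2)] assms(3) that
      by (auto simp: superlevel_def)
  qed
  moreover have "g ` body \<subseteq> - {0}"
    using assms(3) by auto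
  ultimately obtain e where "continuous_on body e" "e ` body \<subseteq> - {0}"
    "\<And>x. x \<in> superlevel \<alpha> \<Longrightarrow> e x = f x"
    using homotopic_nonvanishing_extension[OF closed_subset[OF superlevel_subset_body closed_superlevel] g(1)]
    by metis
  then show ?thesis
    unfolding extends_nonvanishing_def by auto
qed

lemma nonvanishing_perturbation_if_extends_nonvanishing:
  assumes "0 < \<alpha>" "extends_nonvanishing \<alpha>"
  obtains g where "perturbation N K f \<alpha> g" "\<forall>x\<in>body. g x \<noteq> 0"
proof -
  obtain e where e: "continuous_on body e" "e ` body \<subseteq> - {0}" "\<And>x. x \<in> superlevel \<alpha> \<Longrightarrow> e x = f x"
    using assms(2) by (auto simp: extends_nonvanishing_def)
  define g where "g x = f x + (\<alpha> / max \<alpha> (N (e x - f x))) *\<^sub>R (e x - f x)" for x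
  have "N (g x - f x) \<le> \<alpha> \<and> g x \<noteq> 0" if "x \<in> body" for x
  proof -
    have "e x \<noteq> 0"
      using e(2) that by auto
    moreover have "e x = f x" if "N (f x) = \<alpha>"
      using e(3) \<open>x \<in> body\<close> that by (simp add: superlevel_def)
    ultimately show ?thesis
      using is_norm_clipped_step[OF norm assms(1), of "e x" "f x"] by (simp add: g_def)
  qed
  moreover have "continuous_on body g"
    unfolding g_def using assms(1) e(1) continuous_on_body
    by (intro continuous_intros continuous_on_compose_norm) auto
  ultimately show ?thesis
    by (intro that[of g]) (auto simp: perturbation_def)
qed

lemma mem_robust_radii_iff:
  assumes "0 < \<alpha>"
  shows "\<alpha> \<in> robust_radii \<longleftrightarrow> \<not> extends_nonvanishing \<alpha>"
proof
  assume "\<alpha> \<in> robust_radii"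
  show "\<not> extends_nonvanishing \<alpha>"
  proof
    assume "extends_nonvanishing \<alpha>"
    then obtain g where "perturbation N K f \<alpha> g" "\<forall>x\<in>body. g x \<noteq> 0"
      by (rule nonvanishing_perturbation_if_extends_nonvanishing[OF assms])
    with \<open>\<alpha> \<in> robust_radii\<close> show False
      by (auto simp: robust_radii_def)
  qed
next
  assume "\<not> extends_nonvanishing \<alpha>"
  then show "\<alpha> \<in> robust_radii"
    using extends_nonvanishing_if_nonvanishing_perturbation[OF assms] assms
    by (auto simp: robust_radii_def)
qed

lemma zero_mem_robust_radii: "0 \<in> robust_radii"
proof -
  have "\<exists>x\<in>body. g x = 0" if "perturbation N K f 0 g" for g
  proof -
    obtain x where "x \<in> body" "f x = 0"
      using has_root by blast
    moreover from that have "N (g x - f x) \<le> 0"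
      using \<open>x \<in> body\<close> unfolding perturbation_def by blast
    ultimately have "N (g x) \<le> 0"
      by simp
    then show ?thesis
      using \<open>x \<in> body\<close> is_norm_nonneg[OF norm, of "g x"] is_norm_eq_zero[OF norm, of "g x"] by force
  qed
  then show ?thesis
    by (simp add: robust_radii_def)
qed

lemma bdd_above_robust_radii: "bdd_above robust_radii"
proof -
  obtain x_max where "x_max \<in> body" and x_max: "\<And>x. x \<in> body \<Longrightarrow> N (f x) \<le> N (f x_max)"
    using continuous_attains_sup[OF compact_body body_nonempty continuous_on_compose_norm[OF continuous_on_body]]
    by blast
  have "\<alpha> \<le> N (f x_max)" if "\<alpha> \<in> robust_radii" for \<alpha>
  proof -
    define c :: "real ^ 'n" where "c = (\<alpha> / N 1) *\<^sub>R 1"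
    have "(1 :: real ^ 'n) \<noteq> 0"
      by (simp add: vec_eq_iff)
    then have "0 < N 1"
      by (rule is_norm_pos[OF norm])
    then have "N c = \<alpha>"
      using that by (simp add: c_def is_norm_scaleR[OF norm] robust_radii_def)
    then have "perturbation N K f \<alpha> (\<lambda>x. f x + c)"
      by (simp add: perturbation_def continuous_on_body continuous_on_add)
    then have "\<exists>x\<in>body. f x + c = 0"
      using that by (simp add: robust_radii_def)
    then obtain x where "x \<in> body" "f x + c = 0" ..
    then have "f x = - c"
      by (simp add: eq_neg_iff_add_eq_0)
    then have "N (f x) = \<alpha>"
      using \<open>N c = \<alpha>\<close> by (simp add: is_norm_minus[OF norm])
    then show ?thesis
      using x_max[OF \<open>x \<in> body\<close>] by simp
  qed
  then show ?thesis
    by (auto simp: bdd_above_def)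
qed

lemma rob_eq_Sup: "rob N K f = Sup robust_radii"
  by (simp add: rob_def robust_radii_def)

lemma rob_nonneg: "0 \<le> rob N K f"
  using zero_mem_robust_radii bdd_above_robust_radii by (simp add: rob_eq_Sup cSup_upper)

text \<open>A root-free \<open>rob\<close>-perturbation \<open>g\<close> is bounded away from \<open>0\<close> on the compact body, so
  pulling it towards \<open>f\<close> by a factor \<open>s / rob\<close>, for a robust radius \<open>s\<close> close to \<open>rob\<close>,
  would give a root-free \<open>s\<close>-perturbation.\<close>

lemma rob_mem_robust_radii: "rob N K f \<in> robust_radii"
proof -
  define r where "r = rob N K f"
  have "\<exists>x\<in>body. g x = 0" if g: "perturbation N K f r g" for g
  proof (rule ccontr)
    assume no_root: "\<not> (\<exists>x\<in>body. g x = 0)"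
    have cont_g: "continuous_on body g" and close: "\<And>x. x \<in> body \<Longrightarrow> N (g x - f x) \<le> r"
      using g by (auto simp: perturbation_def)
    obtain x_min where "x_min \<in> body" and x_min: "\<And>x. x \<in> body \<Longrightarrow> N (g x_min) \<le> N (g x)"
      using continuous_attains_inf[OF compact_body body_nonempty continuous_on_compose_norm[OF cont_g]]
      by blast
    define \<delta> where "\<delta> = N (g x_min)"
    have "0 < \<delta>"
      using no_root \<open>x_min \<in> body\<close> is_norm_pos[OF norm] by (auto simp: \<delta>_def)
    have "0 < r"
    proof (rule ccontr)
      assume "\<not> 0 < r"
      then have "perturbation N K f 0 g"
        using g rob_nonneg by (simp add: r_def)
      then show False
        using no_root zero_mem_robust_radii by (auto simp: robust_radii_def)
    qed
    then have "max 0 (r - \<delta>) < Sup robust_radii"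
      using \<open>0 < \<delta>\<close> by (simp add: r_def rob_eq_Sup)
    moreover have "robust_radii \<noteq> {}"
      using zero_mem_robust_radii by auto
    ultimately obtain s where s: "s \<in> robust_radii" "max 0 (r - \<delta>) < s"
      using less_cSup_iff[OF _ bdd_above_robust_radii] by blast
    have "s \<le> r"
      using cSup_upper[OF s(1) bdd_above_robust_radii] by (simp add: r_def rob_eq_Sup)
    define t where "t = s / r"
    have t: "0 < t" "t \<le> 1"
      using s(2) \<open>s \<le> r\<close> \<open>0 < r\<close> by (auto simp: t_def)
    define g' where "g' x = f x + t *\<^sub>R (g x - f x)" for x
    have "perturbation N K f s g'"
    proof -
      have "N (g' x - f x) \<le> s" if "x \<in> body" for x
      proof -
        have "N (g' x - f x) = t * N (g x - f x)"
          using t by (simp add: g'_def is_norm_scaleR[OF norm])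
        also have "\<dots> \<le> t * r"
          using close[OF that] t by (simp add: mult_left_mono)
        finally show ?thesis
          using \<open>0 < r\<close> by (simp add: t_def)
      qed
      moreover have "continuous_on body g'"
        unfolding g'_def by (intro continuous_intros continuous_on_body cont_g)
      ultimately show ?thesis
        by (simp add: perturbation_def)
    qed
    then obtain x where "x \<in> body" "g' x = 0"
      using s(1) by (auto simp: robust_radii_def)
    then have "g x = (1 - t) *\<^sub>R (g x - f x)"
      by (simp add: g'_def algebra_simps)
    then have "N (g x) = N ((1 - t) *\<^sub>R (g x - f x))"
      by (rule arg_cong)
    also have "\<dots> = (1 - t) * N (g x - f x)"
      using t by (simp add: is_norm_scaleR[OF norm])
    also have "\<dots> \<le> (1 - t) * r"
      using close[OF \<open>x \<in> body\<close>] t by (simp add: mult_left_mono)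
    also have "\<dots> = r - s"
      using \<open>0 < r\<close> by (simp add: t_def algebra_simps)
    finally show False
      using s(2) x_min[OF \<open>x \<in> body\<close>] by (simp add: \<delta>_def)
  qed
  then show ?thesis
    using rob_nonneg by (simp add: robust_radii_def r_def)
qed

lemma segment_beyond_in_superlevel:
  assumes "D \<in> K" "a \<in> D" "N (f a) < \<alpha>" "x \<in> D \<inter> superlevel \<alpha>"
    and "1 \<le> d" "a + d *\<^sub>R (x - a) \<in> D"
  shows "closed_segment x (a + d *\<^sub>R (x - a)) \<subseteq> D \<inter> superlevel \<alpha>"
proof
  fix z assume z: "z \<in> closed_segment x (a + d *\<^sub>R (x - a))"
  have "x \<in> D" and x: "\<alpha> \<le> N (f x)"
    using assms(4) by (auto simp: superlevel_def)
  have "z \<in> D"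
    using z closed_segment_subset[OF \<open>x \<in> D\<close> assms(6) convex_simplex[OF assms(1)]] by blast
  obtain u where u: "0 \<le> u" "u \<le> 1" "z = (1 - u) *\<^sub>R x + u *\<^sub>R (a + d *\<^sub>R (x - a))"
    using z by (auto simp: in_segment)
  define s where "s = (1 - u) + u * d"
  have "1 \<le> s"
    using u assms(5) mult_left_mono[of 1 d u] by (simp add: s_def)
  have "z = (1 - s) *\<^sub>R a + s *\<^sub>R x"
    by (simp add: u(3) s_def algebra_simps)
  then have "f z = (1 - s) *\<^sub>R f a + s *\<^sub>R f x"
    using affine_on_simplex[OF assms(1,2) \<open>x \<in> D\<close>] \<open>z \<in> D\<close> by simp
  then have "N (f x) \<le> N (f z)"
    using is_norm_ge_on_ray[OF norm \<open>1 \<le> s\<close>, of "f a" "f x"] assms(3) x by simp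
  then show "z \<in> D \<inter> superlevel \<alpha>"
    using \<open>z \<in> D\<close> x simplex_subset_body[OF assms(1)] by (auto simp: superlevel_def)
qed

lemma radial_retraction_of_superlevel_in_simplex:
  assumes "D \<in> K" "a \<in> rel_interior D" "N (f a) < \<alpha>"
  obtains \<rho> where "continuous_on (D \<inter> superlevel \<alpha>) \<rho>"
    and "\<And>x. x \<in> D \<inter> superlevel \<alpha> \<Longrightarrow>
           \<rho> x \<in> rel_frontier D \<and> closed_segment x (\<rho> x) \<subseteq> D \<inter> superlevel \<alpha>"
    and "\<And>x. x \<in> rel_frontier D \<Longrightarrow> \<rho> x = x"
proof -
  have convex: "convex D" and closed: "closed D"
    using assms(1) by (simp_all add: convex_simplex closed_simplex)
  obtain \<rho> where cont: "continuous_on (affine hull D - {a}) \<rho>"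
    and \<rho>: "\<And>x. x \<in> affine hull D - {a} \<Longrightarrow> \<rho> x \<in> rel_frontier D \<and> (\<exists>d>0. \<rho> x = a + d *\<^sub>R (x - a))"
    using radial_projection_to_rel_frontier[OF convex compact_imp_bounded[OF compact_simplex[OF assms(1)]] assms(2)]
    by blast
  have "a \<in> D"
    using assms(2) rel_interior_subset by blast
  have frontier_D: "rel_frontier D \<subseteq> D"
    using closed by (auto simp: rel_frontier_def)
  have superlevel_sub: "D \<inter> superlevel \<alpha> \<subseteq> affine hull D - {a}"
    using assms(3) hull_subset[of D affine] by (auto simp: superlevel_def)
  show ?thesis
  proof
    show "continuous_on (D \<inter> superlevel \<alpha>) \<rho>"
      using cont superlevel_sub by (rule continuous_on_subset)
  next
    fix x assume x: "x \<in> D \<inter> superlevel \<alpha>"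
    then obtain d where "0 < d" and \<rho>x: "\<rho> x \<in> rel_frontier D" "\<rho> x = a + d *\<^sub>R (x - a)"
      using \<rho> superlevel_sub by blast
    moreover have "1 \<le> d"
      using rel_frontier_ray_ge_one[OF convex assms(2), of x d] x \<rho>x \<open>0 < d\<close> closure_subset by auto
    ultimately show "\<rho> x \<in> rel_frontier D \<and> closed_segment x (\<rho> x) \<subseteq> D \<inter> superlevel \<alpha>"
      using segment_beyond_in_superlevel[OF assms(1) \<open>a \<in> D\<close> assms(3) x] frontier_D by auto
  next
    fix x assume x: "x \<in> rel_frontier D"
    then have "x \<in> affine hull D - {a}"
      using assms(2) rel_frontier_affine_hull[of D] by (auto simp: rel_frontier_def)
    then obtain d where "0 < d" "\<rho> x \<in> rel_frontier D" "\<rho> x = a + d *\<^sub>R (x - a)"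
      using \<rho> by blast
    moreover have "a + 1 *\<^sub>R (x - a) \<in> rel_frontier D"
      using x by simp
    ultimately have "d = 1"
      using rel_frontier_ray_unique[OF convex assms(2), of d 1 "x - a"] by simp
    with \<open>\<rho> x = a + d *\<^sub>R (x - a)\<close> show "\<rho> x = x"
      by simp
  qed
qed

lemma rel_frontier_maximal_simplex:
  assumes "L \<subseteq> K" "face_closed L" "D \<in> L" "\<And>E. E \<in> L \<Longrightarrow> D \<subseteq> E \<Longrightarrow> E = D"
  shows "rel_frontier D = D \<inter> \<Union>(L - {D})"
proof
  show "rel_frontier D \<subseteq> D \<inter> \<Union>(L - {D})"
  proof
    fix x assume x: "x \<in> rel_frontier D"
    have "D \<in> K"
      using assms(1,3) by blast
    then obtain F where "F facet_of D" "x \<in> F"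
      using x rel_frontier_of_polyhedron[OF polytope_imp_polyhedron[OF polytope_simplex]] by blast
    then have "F \<in> L - {D}"
      using assms(2,3) by (auto simp: facet_of_def face_closed_def)
    moreover have "x \<in> D"
      using x closed_simplex[OF \<open>D \<in> K\<close>] by (auto simp: rel_frontier_def)
    ultimately show "x \<in> D \<inter> \<Union>(L - {D})"
      using \<open>x \<in> F\<close> by blast
  qed
next
  show "D \<inter> \<Union>(L - {D}) \<subseteq> rel_frontier D"
  proof
    fix x assume "x \<in> D \<inter> \<Union>(L - {D})"
    then obtain E where "x \<in> D" "x \<in> E" "E \<in> L" "E \<noteq> D"
      by blast
    then have "(D \<inter> E) face_of D" "D \<inter> E \<noteq> D"
      using Int_simplex_face_of assms by blast+
    with \<open>x \<in> D\<close> \<open>x \<in> E\<close> show "x \<in> rel_frontier D"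
      using face_of_subset_rel_frontier by blast
  qed
qed

lemma rel_interior_point_below:
  assumes "D \<in> K" "x0 \<in> D" "N (f x0) < \<alpha>"
  obtains a where "a \<in> rel_interior D" "N (f a) < \<alpha>"
proof -
  have convex: "convex D"
    using assms(1) by (rule convex_simplex)
  obtain c where c: "c \<in> rel_interior D"
    using assms(2) rel_interior_eq_empty[OF convex] by blast
  then have "c \<in> D"
    using rel_interior_subset by blast
  define m M where "m = N (f x0)" and "M = N (f c)"
  have "0 \<le> m" "0 \<le> M"
    by (simp_all add: m_def M_def is_norm_nonneg[OF norm])
  define e where "e = min 1 ((\<alpha> - m) / (2 * (M + 1)))"
  have "0 < (\<alpha> - m) / (2 * (M + 1))"
    using assms(3) \<open>0 \<le> M\<close> by (simp add: m_def)
  then have e: "0 < e" "e \<le> 1"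
    by (simp_all add: e_def)
  have "e * (M + 1) \<le> (\<alpha> - m) / (2 * (M + 1)) * (M + 1)"
    using \<open>0 \<le> M\<close> by (intro mult_right_mono) (auto simp: e_def)
  also have "\<dots> = (\<alpha> - m) / 2"
    using \<open>0 \<le> M\<close> by (simp add: field_simps)
  finally have "e * (M + 1) \<le> (\<alpha> - m) / 2" .
  define a where "a = x0 - e *\<^sub>R (x0 - c)"
  have "a \<in> rel_interior D"
    unfolding a_def by (rule rel_interior_convex_shrink[OF convex c assms(2) e])
  moreover have "N (f a) < \<alpha>"
  proof -
    have "a = (1 - e) *\<^sub>R x0 + e *\<^sub>R c" "a \<in> D"
      using \<open>a \<in> rel_interior D\<close> rel_interior_subset by (auto simp: a_def algebra_simps)
    then have "N (f a) \<le> (1 - e) * m + e * M"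
      using affine_on_simplex[OF assms(1,2) \<open>c \<in> D\<close>, of e]
        is_norm_convex_combination[OF norm less_imp_le[OF e(1)] e(2)]
      by (simp add: m_def M_def)
    also have "\<dots> \<le> m + e * (M + 1)"
      using e \<open>0 \<le> m\<close> by (simp add: algebra_simps)
    also have "\<dots> \<le> m + (\<alpha> - m) / 2"
      using \<open>e * (M + 1) \<le> (\<alpha> - m) / 2\<close> by simp
    also have "\<dots> < \<alpha>"
      using assms(3) by (simp add: m_def field_simps)
    finally show ?thesis .
  qed
  ultimately show ?thesis
    by (rule that)
qed

text \<open>The radial push of \<open>D\<close> onto its relative frontier is the identity where \<open>D\<close> meets the
  rest of \<open>L\<close>, so it glues with the identity to a map on all of \<open>\<Union>L\<close>.\<close>

lemma collapse_maximal_simplex: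
  assumes "L \<subseteq> K" "face_closed L" "D \<in> L" "\<And>E. E \<in> L \<Longrightarrow> D \<subseteq> E \<Longrightarrow> E = D"
    and "x0 \<in> D" "N (f x0) < \<alpha>"
  shows "deforms_into (superlevel \<alpha>) (\<Union>L \<inter> superlevel \<alpha>) (\<Union>(L - {D}) \<inter> superlevel \<alpha>)"
proof -
  have "D \<in> K"
    using assms(1,3) by blast
  obtain a where "a \<in> rel_interior D" "N (f a) < \<alpha>"
    using rel_interior_point_below[OF \<open>D \<in> K\<close> assms(5,6)] .
  then obtain \<rho> where cont: "continuous_on (D \<inter> superlevel \<alpha>) \<rho>"
    and \<rho>: "\<And>x. x \<in> D \<inter> superlevel \<alpha> \<Longrightarrow>
           \<rho> x \<in> rel_frontier D \<and> closed_segment x (\<rho> x) \<subseteq> D \<inter> superlevel \<alpha>"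
    and fixed: "\<And>x. x \<in> rel_frontier D \<Longrightarrow> \<rho> x = x"
    using radial_retraction_of_superlevel_in_simplex[OF \<open>D \<in> K\<close>] by metis
  have frontier_D: "rel_frontier D = D \<inter> \<Union>(L - {D})"
    by (rule rel_frontier_maximal_simplex[OF assms(1-4)])
  define X where "X = \<Union>L \<inter> superlevel \<alpha>"
  define X' where "X' = \<Union>(L - {D}) \<inter> superlevel \<alpha>"
  define \<rho>' where "\<rho>' x = (if x \<in> D then \<rho> x else x)" for x
  have X_split: "X = (D \<inter> superlevel \<alpha>) \<union> X'"
    using assms(3) by (auto simp: X_def X'_def)
  have "closed X'"
  proof -
    have "finite (L - {D})"
      using assms(1) finite_K finite_subset by blast
    then show ?thesis
      using assms(1) closed_simplex closed_superlevel by (auto simp: X'_def intro!: closed_Int closed_Union)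
  qed
  have cont': "continuous_on X \<rho>'"
    unfolding X_split \<rho>'_def
    by (rule continuous_on_cases[OF closed_Int[OF closed_simplex[OF \<open>D \<in> K\<close>] closed_superlevel]
          \<open>closed X'\<close> cont continuous_on_id])
      (use fixed frontier_D in \<open>auto simp: X'_def\<close>)
  have segment: "closed_segment x (\<rho>' x) \<subseteq> X" if "x \<in> X" for x
  proof (cases "x \<in> D")
    case True
    then have "x \<in> D \<inter> superlevel \<alpha>"
      using that by (auto simp: X_def)
    then show ?thesis
      using \<rho>[of x] True by (auto simp: \<rho>'_def X_split)
  next
    case False
    then show ?thesis
      using that by (simp add: \<rho>'_def)
  qed
  have "\<rho>' ` X \<subseteq> X'"
  proof
    fix y assume "y \<in> \<rho>' ` X"
    then obtain x where x: "x \<in> X" "y = \<rho>' x"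
      by blast
    show "y \<in> X'"
    proof (cases "x \<in> D")
      case True
      then have "\<rho> x \<in> rel_frontier D" "\<rho> x \<in> superlevel \<alpha>"
        using \<rho>[of x] x(1) ends_in_segment(2)[of x "\<rho> x"] by (auto simp: X_def)
      then show ?thesis
        using True x(2) frontier_D by (auto simp: \<rho>'_def X'_def)
    next
      case False
      then show ?thesis
        using x X_split by (auto simp: \<rho>'_def)
    qed
  qed
  moreover have "homotopic_with_canon (\<lambda>_. True) X X id \<rho>'"
    by (rule homotopic_with_linear[OF continuous_on_id' cont']) (use segment in simp)
  then have "homotopic_with_canon (\<lambda>_. True) X (superlevel \<alpha>) id \<rho>'"
    by (rule homotopic_with_subset_right) (auto simp: X_def)
  ultimately show ?thesis
    using cont' unfolding deforms_into_def X_def[symmetric] X'_def[symmetric] by auto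
qed

lemma superlevel_deforms_into_superlevel:
  assumes "\<And>t. \<alpha> \<le> t \<Longrightarrow> t \<le> \<beta> \<Longrightarrow> \<not> critical_value t"
  shows "deforms_into (superlevel \<alpha>) (superlevel \<alpha>) (superlevel \<beta>)"
proof -
  have deforms: "deforms_into (superlevel \<alpha>) (\<Union>L \<inter> superlevel \<alpha>) (superlevel \<beta>)"
    if "L \<subseteq> K" "face_closed L" for L
    using finite_subset[OF that(1) finite_K] that
  proof (induction L rule: finite_psubset_induct)
    case (psubset L)
    show ?case
    proof (cases "\<forall>D\<in>L. D \<subseteq> superlevel \<beta>")
      case True
      then show ?thesis
        by (intro deforms_into_subset) auto
    next
      case False
      then have "{D \<in> L. \<not> D \<subseteq> superlevel \<beta>} \<noteq> {}"
        by auto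
      moreover have "finite {D \<in> L. \<not> D \<subseteq> superlevel \<beta>}"
        using psubset.hyps by simp
      ultimately obtain D where D: "D \<in> {D \<in> L. \<not> D \<subseteq> superlevel \<beta>}"
        and maximal: "\<forall>E\<in>{D \<in> L. \<not> D \<subseteq> superlevel \<beta>}. D \<subseteq> E \<longrightarrow> D = E"
        using finite_has_maximal by blast
      have "D \<in> L" "D \<in> K"
        using D psubset.prems(1) by auto
      have maximal_in_L: "E = D" if "E \<in> L" "D \<subseteq> E" for E
        using maximal D that by blast
      obtain x where "x \<in> D" "x \<notin> superlevel \<beta>"
        using D by auto
      then have "N (f x) < \<beta>"
        using simplex_subset_body[OF \<open>D \<in> K\<close>] by (auto simp: superlevel_def)
      obtain x0 where "x0 \<in> D" and x0: "\<And>x. x \<in> D \<Longrightarrow> N (f x0) \<le> N (f x)"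
        using min_on_simplex[OF \<open>D \<in> K\<close>] \<open>x \<in> D\<close> by blast
      have "N (f x0) < \<alpha>"
      proof (rule ccontr)
        assume "\<not> N (f x0) < \<alpha>"
        moreover have "N (f x0) \<le> \<beta>"
          using x0[OF \<open>x \<in> D\<close>] \<open>N (f x) < \<beta>\<close> by simp
        moreover have "critical_value (N (f x0))"
          unfolding critical_value_def using \<open>D \<in> K\<close> \<open>x0 \<in> D\<close> x0 by blast
        ultimately show False
          using assms by simp
      qed
      then have "deforms_into (superlevel \<alpha>) (\<Union>L \<inter> superlevel \<alpha>) (\<Union>(L - {D}) \<inter> superlevel \<alpha>)"
        using collapse_maximal_simplex[OF psubset.prems(1,2) \<open>D \<in> L\<close> maximal_in_L \<open>x0 \<in> D\<close>] by simp
      moreover have "face_closed (L - {D})"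
        unfolding face_closed_def
      proof (intro ballI allI impI)
        fix E F assume "E \<in> L - {D}" "F face_of E"
        moreover from this have "F \<noteq> D"
          using maximal_in_L face_of_imp_subset by blast
        ultimately show "F \<in> L - {D}"
          using psubset.prems(2) by (auto simp: face_closed_def)
      qed
      then have "deforms_into (superlevel \<alpha>) (\<Union>(L - {D}) \<inter> superlevel \<alpha>) (superlevel \<beta>)"
        using psubset.IH[of "L - {D}"] \<open>D \<in> L\<close> psubset.prems(1) by blast
      ultimately show ?thesis
        by (rule deforms_into_trans)
    qed
  qed
  have "face_closed K"
    using face_of_simplex_in_K by (auto simp: face_closed_def)
  moreover have "\<Union>K \<inter> superlevel \<alpha> = superlevel \<alpha>"
    using superlevel_subset_body by (auto simp: cplx_body_def)
  ultimately show ?thesis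
    using deforms[OF order_refl] by simp
qed

lemma extends_nonvanishing_lower_level:
  assumes "0 < \<alpha>" "deforms_into (superlevel \<alpha>) (superlevel \<alpha>) (superlevel \<beta>)"
    and "extends_nonvanishing \<beta>"
  shows "extends_nonvanishing \<alpha>"
proof -
  obtain \<psi> where "continuous_on (superlevel \<alpha>) \<psi>" and \<psi>: "\<psi> ` superlevel \<alpha> \<subseteq> superlevel \<beta>"
    and hom: "homotopic_with_canon (\<lambda>_. True) (superlevel \<alpha>) (superlevel \<alpha>) id \<psi>"
    using assms(2) by (auto simp: deforms_into_def)
  obtain e where e: "continuous_on body e" "e ` body \<subseteq> - {0}"
    and e_eq: "\<And>x. x \<in> superlevel \<beta> \<Longrightarrow> e x = f x"
    using assms(3) by (auto simp: extends_nonvanishing_def)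
  have "e \<in> superlevel \<alpha> \<rightarrow> - {0}"
    using e(2) superlevel_subset_body by (force simp: image_subset_iff)
  then have "homotopic_with_canon (\<lambda>_. True) (superlevel \<alpha>) (- {0}) (e \<circ> id) (e \<circ> \<psi>)"
    using e(1) superlevel_subset_body
    by (intro homotopic_with_compose_continuous_left[OF hom]) (auto intro: continuous_on_subset)
  then have "homotopic_with_canon (\<lambda>_. True) (superlevel \<alpha>) (- {0}) e (f \<circ> \<psi>)"
    by (rule homotopic_with_eq) (use \<psi> e_eq in \<open>auto simp: image_subset_iff\<close>)
  moreover have "homotopic_with_canon (\<lambda>_. True) (superlevel \<alpha>) (- {0}) (f \<circ> id) (f \<circ> \<psi>)"
    using continuous_on_body superlevel_subset_body f_nonzero_on_superlevel[OF assms(1)]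
    by (intro homotopic_with_compose_continuous_left[OF hom]) (auto intro: continuous_on_subset)
  then have "homotopic_with_canon (\<lambda>_. True) (superlevel \<alpha>) (- {0}) (f \<circ> \<psi>) f"
    unfolding comp_id by (rule homotopic_with_symD)
  ultimately have "homotopic_with_canon (\<lambda>_. True) (superlevel \<alpha>) (- {0}) e f"
    by (rule homotopic_with_trans)
  then obtain e' where "continuous_on body e'" "e' ` body \<subseteq> - {0}"
    "\<And>x. x \<in> superlevel \<alpha> \<Longrightarrow> e' x = f x"
    using homotopic_nonvanishing_extension[OF closed_subset[OF superlevel_subset_body closed_superlevel] e]
    by metis
  then show ?thesis
    unfolding extends_nonvanishing_def by auto
qed

lemma critical_value_rob_if_zero:
  assumes "rob N K f = 0"
  shows "critical_value (rob N K f)"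
proof -
  obtain x D where "D \<in> K" "x \<in> D" "f x = 0"
    using has_root by (auto simp: cplx_body_def)
  then show ?thesis
    using assms unfolding critical_value_def
    by (metis is_norm_nonneg[OF norm] is_norm_zero[OF norm])
qed

theorem critical_value_rob: "critical_value (rob N K f)"
proof (rule ccontr)
  define r where "r = rob N K f"
  assume "\<not> critical_value (rob N K f)"
  then have not_critical: "\<not> critical_value r"
    by (simp add: r_def)
  have "r \<noteq> 0"
    using critical_value_rob_if_zero not_critical by (auto simp: r_def)
  then have "0 < r"
    using rob_nonneg by (simp add: r_def)
  obtain e where "0 < e" and gap: "ball r e \<subseteq> - {t. critical_value t}"
    using open_contains_ball_eq[OF finite_imp_closed[OF finite_critical_values, unfolded closed_def]]
      not_critical by blast
  define \<beta> where "\<beta> = r + e / 2"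
  have "r < \<beta>"
    using \<open>0 < e\<close> by (simp add: \<beta>_def)
  have no_critical: "\<not> critical_value t" if "r \<le> t" "t \<le> \<beta>" for t
    using gap that \<open>0 < e\<close> by (auto simp: \<beta>_def dist_real_def subset_iff)
  have "\<beta> \<notin> robust_radii"
    using cSup_upper[OF _ bdd_above_robust_radii] \<open>r < \<beta>\<close> by (force simp: r_def rob_eq_Sup)
  then have "extends_nonvanishing \<beta>"
    using mem_robust_radii_iff \<open>0 < r\<close> \<open>r < \<beta>\<close> by simp
  then have "extends_nonvanishing r"
    using extends_nonvanishing_lower_level[OF \<open>0 < r\<close> superlevel_deforms_into_superlevel[OF no_critical]]
    by blast
  then show False
    using rob_mem_robust_radii mem_robust_radii_iff[OF \<open>0 < r\<close>] by (simp add: r_def)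
qed

end

theorem corollary3p6:
  fixes K :: "'a::euclidean_space set set"
    and N :: "real ^ 'n \<Rightarrow> real"
    and f :: "'a \<Rightarrow> real ^ 'n"
  assumes "simplicial_complex K"
    and "is_norm N"
    and "piecewise_linear_on K f"
    and "\<exists>x\<in>cplx_body K. f x = 0"
  shows "\<exists>D\<in>K. \<exists>x0\<in>D. N (f x0) = rob N K f \<and> (\<forall>x\<in>D. N (f x0) \<le> N (f x))"
proof -
  interpret pl_map_with_root K N f
    using assms by unfold_locales
  show ?thesis
    using critical_value_rob unfolding critical_value_def .
qed

end
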